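(* Let $\pi$ be a propositional formula that is neither a tautology nor a contradiction. Then $\Box\bot\leftrightarrow[\dagger\pi]\Box\bot$ is valid (true at every world of every model).
   Context: Fix a countable non-empty set $\mathit{At}$ of atoms. Formulas are built from $\top$, atoms, $\lnot$, $\land$, $\Box$ and, for each propositional $\pi$, the operator $[\dagger\pi]$ ("after the agent forgets $\pi$"). A model is $\mathcal{M}=\langle W,R,V\rangle$, $W\neq\varnothing$, $R\subseteq W\times W$ arbitrary, $V:\mathit{At}\to\mathcal{P}(W)$, with standard Kripke semantics for $\Box$. A literal is an atom or its negation; a clause is a finite set $D$ of literals read as $\bigvee D$ ($\bigvee\varnothing:=\bot$), tautological if it contains $p$ and $\lnot p$ for some $p$. For propositional $\pi$, $\mathcal{C}(\pi)$ is the set of non-tautological clauses $D$ with $\models\pi\to\bigvee D$ and no $D'\subsetneq D$ with $\models\pi\to\bigvee D'$. For a model $\mathcal{M}$ and a non-tautological clause $D$, $\mathcal{M}^{(D)}_u=\langle W',R',V'\rangle$ has $W'=W\times\{0,1\}$, $(w,i)R'(v,j)$ iff $wRv$, $(w,0)\in V'(p)$ iff $w\in V(p)$, and $(w,1)\in V'(p)$ iff $\lnot p\in D$, or $\{p,\lnot p\}\cap D=\varnothing$ and $w\in V(p)$. Semantics: $\mathcal{M},w\models[\dagger\pi]\varphi$ iff for all $D\in\mathcal{C}(\pi)$, $\mathcal{M}^{(D)}_u,(w,0)\models\varphi$. *)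

theory Defs
  imports Main "HOL-Library.Countable"
begin

datatype 'a pform = PTop | PAtom 'a | PNeg "'a pform" | PConj "'a pform" "'a pform"

primrec peval :: "('a \<Rightarrow> bool) \<Rightarrow> 'a pform \<Rightarrow> bool" where
  "peval v PTop = True"
| "peval v (PAtom p) = v p"
| "peval v (PNeg a) = (\<not> peval v a)"
| "peval v (PConj a b) = (peval v a \<and> peval v b)"

definition ptautology :: "'a pform \<Rightarrow> bool" where
  "ptautology \<pi> \<longleftrightarrow> (\<forall>v. peval v \<pi>)"

definition pcontradiction :: "'a pform \<Rightarrow> bool" where
  "pcontradiction \<pi> \<longleftrightarrow> (\<forall>v. \<not> peval v \<pi>)"

datatype 'a lit = Pos 'a | NegLit 'a

primrec lit_eval :: "('a \<Rightarrow> bool) \<Rightarrow> 'a lit \<Rightarrow> bool" where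
  "lit_eval v (Pos p) = v p"
| "lit_eval v (NegLit p) = (\<not> v p)"

text \<open>A clause is a finite set of literals, read as their disjunction (empty = falsum).\<close>
definition clause_tautological :: "'a lit set \<Rightarrow> bool" where
  "clause_tautological D \<longleftrightarrow> (\<exists>p. Pos p \<in> D \<and> NegLit p \<in> D)"

definition entails_clause :: "'a pform \<Rightarrow> 'a lit set \<Rightarrow> bool" where
  "entails_clause \<pi> D \<longleftrightarrow> (\<forall>v. peval v \<pi> \<longrightarrow> (\<exists>l\<in>D. lit_eval v l))"

definition clauses :: "'a pform \<Rightarrow> 'a lit set set" where
  "clauses \<pi> = {D. finite D \<and> \<not> clause_tautological D \<and> entails_clause \<pi> D
                   \<and> \<not> (\<exists>D'. D' \<subset> D \<and> entails_clause \<pi> D')}"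

datatype 'a fm = Top | Atom 'a | Neg "'a fm" | Conj "'a fm" "'a fm" | Box "'a fm"
  | Forget "'a pform" "'a fm"

definition Bot :: "'a fm" where "Bot = Neg Top"
definition Disj :: "'a fm \<Rightarrow> 'a fm \<Rightarrow> 'a fm" where "Disj a b = Neg (Conj (Neg a) (Neg b))"
definition Imp :: "'a fm \<Rightarrow> 'a fm \<Rightarrow> 'a fm" where "Imp a b = Neg (Conj a (Neg b))"
definition Iff :: "'a fm \<Rightarrow> 'a fm \<Rightarrow> 'a fm" where "Iff a b = Conj (Imp a b) (Imp b a)"

record ('a, 'w) kmodel =
  worlds :: "'w set"
  rel :: "('w \<times> 'w) set"
  val :: "'a \<Rightarrow> 'w set"

definition wf_model :: "('a, 'w) kmodel \<Rightarrow> bool" where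
  "wf_model M \<longleftrightarrow> worlds M \<noteq> {} \<and> rel M \<subseteq> worlds M \<times> worlds M
                   \<and> (\<forall>p. val M p \<subseteq> worlds M)"

text \<open>To avoid polymorphic recursion, the semantics works on models whose worlds are
  pairs (w, bs) with bs a list of bits.  The update M^(D)_u of such a model has world set
  W x {0,1}, where the pair ((w,bs), b) is encoded as (w, b # bs); copy 0 is False,
  copy 1 is True.\<close>

definition upd :: "'a lit set \<Rightarrow> ('a, 'w \<times> bool list) kmodel \<Rightarrow> ('a, 'w \<times> bool list) kmodel" where
  "upd D M = \<lparr> worlds = {(w, b # bs) | w bs b. (w, bs) \<in> worlds M},
               rel = {((w, b # bs), (v, c # cs)) | w bs b v cs c. ((w, bs), (v, cs)) \<in> rel M},
               val = (\<lambda>p. {(w, False # bs) | w bs. (w, bs) \<in> val M p}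
                      \<union> {(w, True # bs) | w bs. (w, bs) \<in> worlds M \<and>
                           (NegLit p \<in> D \<or>
                            (Pos p \<notin> D \<and> NegLit p \<notin> D \<and> (w, bs) \<in> val M p))}) \<rparr>"

primrec sat :: "('a, 'w \<times> bool list) kmodel \<Rightarrow> 'w \<times> bool list \<Rightarrow> 'a fm \<Rightarrow> bool" where
  "sat M x Top = True"
| "sat M x (Atom p) = (x \<in> val M p)"
| "sat M x (Neg \<phi>) = (\<not> sat M x \<phi>)"
| "sat M x (Conj \<phi> \<psi>) = (sat M x \<phi> \<and> sat M x \<psi>)"
| "sat M x (Box \<phi>) = (\<forall>y. (x, y) \<in> rel M \<longrightarrow> sat M y \<phi>)"
| "sat M x (Forget \<pi> \<phi>) = (\<forall>D\<in>clauses \<pi>. sat (upd D M) (fst x, False # snd x) \<phi>)"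

definition lift :: "('a, 'w) kmodel \<Rightarrow> ('a, 'w \<times> bool list) kmodel" where
  "lift M = \<lparr> worlds = {(w, []) | w. w \<in> worlds M},
              rel = {((w, []), (v, [])) | w v. (w, v) \<in> rel M},
              val = (\<lambda>p. {(w, []) | w. w \<in> val M p}) \<rparr>"

definition holds :: "('a, 'w) kmodel \<Rightarrow> 'w \<Rightarrow> 'a fm \<Rightarrow> bool" where
  "holds M w \<phi> \<longleftrightarrow> sat (lift M) (w, []) \<phi>"

definition valid :: "'a fm \<Rightarrow> bool" where
  "valid \<phi> \<longleftrightarrow> (\<forall>(M :: ('a, 'w) kmodel) w. wf_model M \<and> w \<in> worlds M \<longrightarrow> holds M w \<phi>)"

end

theory Submission
  imports Defs
begin

text \<open>The update doubles every world, but the relation between the copies mirrors the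
  original one, so a world is a dead end after the update iff it was one before; hence
  \<open>\<box>\<bottom>\<close> is unaffected by every update. It remains to see that \<open>C(\<pi>)\<close> is non-empty, so
  that \<open>[\<dagger>\<pi>]\<close> does not hold vacuously: if \<open>v\<close> falsifies \<open>\<pi>\<close>, the clause of literals
  over the atoms of \<open>\<pi>\<close> that are false under \<open>v\<close> is entailed by \<open>\<pi>\<close>, and any minimal
  entailed subclause lies in \<open>C(\<pi>)\<close>.\<close>

primrec atoms :: "'a pform \<Rightarrow> 'a set" where
  "atoms PTop = {}"
| "atoms (PAtom p) = {p}"
| "atoms (PNeg a) = atoms a"
| "atoms (PConj a b) = atoms a \<union> atoms b"

lemma finite_atoms: "finite (atoms \<pi>)"
  by (induction \<pi>) auto

lemma peval_cong: "(\<And>p. p \<in> atoms \<pi> \<Longrightarrow> u p = v p) \<Longrightarrow> peval u \<pi> = peval v \<pi>"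
  by (induction \<pi>) auto

lemma finite_has_minimal_subset:
  assumes "finite D" and "P D"
  obtains D' where "D' \<subseteq> D" and "P D'" and "\<And>E. E \<subset> D' \<Longrightarrow> \<not> P E"
proof -
  have "finite {E. E \<subseteq> D \<and> P E}"
    using assms(1) by simp
  then obtain D' where D': "D' \<subseteq> D" "P D'" and min: "\<forall>E\<in>{E. E \<subseteq> D \<and> P E}. E \<subseteq> D' \<longrightarrow> D' = E"
    using finite_has_minimal2[of "{E. E \<subseteq> D \<and> P E}" D] assms(2) by auto
  have "\<not> P E" if "E \<subset> D'" for E
    using min that D'(1) by blast
  with D' show thesis by (rule that)
qed

lemma entails_falsifier_clause:
  assumes "\<not> peval v \<pi>"
  shows "entails_clause \<pi> ((\<lambda>p. if v p then NegLit p else Pos p) ` atoms \<pi>)"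
  unfolding entails_clause_def
proof (intro allI impI)
  fix u assume "peval u \<pi>"
  with assms obtain p where "p \<in> atoms \<pi>" "u p \<noteq> v p"
    using peval_cong[of \<pi> u v] by blast
  then show "\<exists>l\<in>(\<lambda>p. if v p then NegLit p else Pos p) ` atoms \<pi>. lit_eval u l"
    by (intro bexI[of _ "if v p then NegLit p else Pos p"]) auto
qed

lemma clauses_nonempty:
  assumes "\<not> ptautology \<pi>"
  shows "clauses \<pi> \<noteq> {}"
proof -
  obtain v where "\<not> peval v \<pi>"
    using assms unfolding ptautology_def by blast
  define D where "D = (\<lambda>p. if v p then NegLit p else Pos p) ` atoms \<pi>"
  have "finite D"
    unfolding D_def using finite_atoms by blast
  moreover have "\<not> clause_tautological D"
    unfolding clause_tautological_def D_def by (auto split: if_splits)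
  moreover have "entails_clause \<pi> D"
    unfolding D_def using \<open>\<not> peval v \<pi>\<close> by (rule entails_falsifier_clause)
  ultimately obtain D' where "D' \<subseteq> D" "entails_clause \<pi> D'" "\<And>E. E \<subset> D' \<Longrightarrow> \<not> entails_clause \<pi> E"
    by (metis finite_has_minimal_subset)
  with \<open>finite D\<close> \<open>\<not> clause_tautological D\<close> have "D' \<in> clauses \<pi>"
    unfolding clauses_def clause_tautological_def by (auto intro: finite_subset)
  then show ?thesis by blast
qed

lemma sat_Box_Bot: "sat M x (Box Bot) \<longleftrightarrow> (\<forall>y. (x, y) \<notin> rel M)"
  by (simp add: Bot_def)

lemma sat_upd_Box_Bot: "sat (upd D M) (w, b # bs) (Box Bot) = sat M (w, bs) (Box Bot)"
proof -
  have "(\<exists>y. ((w, b # bs), y) \<in> rel (upd D M)) \<longleftrightarrow> (\<exists>y. ((w, bs), y) \<in> rel M)"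
    unfolding upd_def by fastforce
  then show ?thesis
    unfolding sat_Box_Bot by blast
qed

lemma sat_Forget_Box_Bot:
  assumes "clauses \<pi> \<noteq> {}"
  shows "sat M x (Forget \<pi> (Box Bot)) = sat M x (Box Bot)"
  using assms by (cases x) (simp only: sat.simps(6) sat_upd_Box_Bot fst_conv snd_conv, blast)

theorem proposition3:
  fixes \<pi> :: "'a::countable pform"
  assumes "\<not> ptautology \<pi>" and "\<not> pcontradiction \<pi>"
  shows "\<forall>(M :: ('a, 'w) kmodel) w. wf_model M \<and> w \<in> worlds M \<longrightarrow>
           holds M w (Iff (Box Bot) (Forget \<pi> (Box Bot)))"
  unfolding holds_def Iff_def Imp_def
  by (simp only: sat.simps(3,4) sat_Forget_Box_Bot[OF clauses_nonempty[OF assms(1)]]) blast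

end
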